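(* The following two statements are equivalent: (A) for every $n\ge 1$, every antipodal $2$-colouring of $E(Q_n)$ contains a monochromatic geodesic between some pair of antipodal vertices; (B) for every $n\ge 1$, in every $2$-colouring of $E(Q_n)$ there is a geodesic between some pair of antipodal vertices which changes colour at most once.
   Context: The hypercube $Q_n$ has vertex set $\{0,1\}^n$, two vertices adjacent iff they differ in exactly one coordinate; the direction of an edge is that coordinate. A path is a geodesic if no two of its edges have the same direction. The antipodal vertex $x'$ of $x$ is the vertex differing from $x$ in every coordinate; the antipodal edge of $e=xy$ is $x'y'$. A $2$-colouring of $E(Q_n)$ is antipodal if no two antipodal edges receive the same colour. A path changes colour at most once if its edge sequence consists of an (possibly empty) initial segment of one colour followed by a segment of the other colour. *)

theory Defs
  imports Main
begin

text \<open>A 2-colouring of E(Q_n) is any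
function from vertex sets to bool (only its values on edges matter).\<close>

definition cube_vertices :: "nat \<Rightarrow> bool list set" where
  "cube_vertices n = {x. length x = n}"

definition adjacent :: "nat \<Rightarrow> bool list \<Rightarrow> bool list \<Rightarrow> bool" where
  "adjacent n x y \<longleftrightarrow> x \<in> cube_vertices n \<and> y \<in> cube_vertices n \<and>
     card {i. i < n \<and> x ! i \<noteq> y ! i} = 1"

definition cube_edges :: "nat \<Rightarrow> bool list set set" where
  "cube_edges n = {{x, y} | x y. adjacent n x y}"

definition antipode :: "bool list \<Rightarrow> bool list" where
  "antipode x = map Not x"

definition antipodal_edge :: "bool list set \<Rightarrow> bool list set" where
  "antipodal_edge e = antipode ` e"

definition antipodal_colouring :: "nat \<Rightarrow> (bool list set \<Rightarrow> bool) \<Rightarrow> bool" where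
  "antipodal_colouring n c \<longleftrightarrow> (\<forall>e \<in> cube_edges n. c e \<noteq> c (antipodal_edge e))"

definition direction :: "bool list \<Rightarrow> bool list \<Rightarrow> nat" where
  "direction x y = (THE i. i < length x \<and> x ! i \<noteq> y ! i)"

definition is_path :: "nat \<Rightarrow> bool list list \<Rightarrow> bool" where
  "is_path n p \<longleftrightarrow> p \<noteq> [] \<and> set p \<subseteq> cube_vertices n \<and>
     (\<forall>i. Suc i < length p \<longrightarrow> adjacent n (p ! i) (p ! Suc i))"

definition path_edges :: "bool list list \<Rightarrow> bool list set list" where
  "path_edges p = map (\<lambda>i. {p ! i, p ! Suc i}) [0..<length p - 1]"

definition path_directions :: "bool list list \<Rightarrow> nat list" where
  "path_directions p = map (\<lambda>i. direction (p ! i) (p ! Suc i)) [0..<length p - 1]"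

definition geodesic :: "nat \<Rightarrow> bool list list \<Rightarrow> bool" where
  "geodesic n p \<longleftrightarrow> is_path n p \<and> distinct (path_directions p)"

definition geodesic_between :: "nat \<Rightarrow> bool list list \<Rightarrow> bool list \<Rightarrow> bool list \<Rightarrow> bool" where
  "geodesic_between n p x y \<longleftrightarrow> geodesic n p \<and> hd p = x \<and> last p = y"

definition monochromatic :: "(bool list set \<Rightarrow> bool) \<Rightarrow> bool list list \<Rightarrow> bool" where
  "monochromatic c p \<longleftrightarrow> (\<exists>b. \<forall>e \<in> set (path_edges p). c e = b)"

definition changes_colour_at_most_once :: "(bool list set \<Rightarrow> bool) \<Rightarrow> bool list list \<Rightarrow> bool" where
  "changes_colour_at_most_once c p \<longleftrightarrow>
     (\<exists>b k m. map c (path_edges p) = replicate k b @ replicate m (\<not> b))"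

end

theory Submission
  imports Defs
begin

text \<open>
(B) implies (A): cut an antipodal geodesic that changes colour once at the vertex v, and replace
the part after v by its antipodal image. This gives a geodesic from v' to v whose two segments,
in an antipodal colouring, have the same colour.

(A) implies (B): extend a colouring c of Q_n to an antipodal colouring of Q_(n+1) by copying c
onto the lower half {x. x_0 = 0}, putting the antipodal image of the complementary colouring onto
the upper half, and colouring the edges of direction 0 by a coordinate that the antipodal map
flips. A monochromatic antipodal geodesic of Q_(n+1) may be assumed to start in the lower half;
it crosses to the upper half exactly once. Dropping the first coordinate turns it into an
antipodal geodesic of Q_n through its crossing point, and the half-turn of (B) implies (A),
applied at that point, produces an antipodal geodesic of Q_n coloured by c with a single colour
change.
\<close>

lemma adjacentD:
  assumes "adjacent n a b"
  shows "length a = n" "length b = n" "direction a b < n"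
    "a ! direction a b \<noteq> b ! direction a b"
    "\<And>i. i < n \<Longrightarrow> i \<noteq> direction a b \<Longrightarrow> a ! i = b ! i"
proof -
  show la: "length a = n" and "length b = n"
    using assms by (auto simp: adjacent_def cube_vertices_def)
  from assms have "card {i. i < n \<and> a ! i \<noteq> b ! i} = 1" by (simp add: adjacent_def)
  then obtain d where d: "{i. i < n \<and> a ! i \<noteq> b ! i} = {d}" by (rule card_1_singletonE)
  then have "direction a b = d"
    unfolding direction_def using la by (intro the_equality) auto
  with d show "direction a b < n" "a ! direction a b \<noteq> b ! direction a b"
    "\<And>i. i < n \<Longrightarrow> i \<noteq> direction a b \<Longrightarrow> a ! i = b ! i"
    by auto
qed

lemma adjacentI:
  assumes "length a = n" "length b = n" "d < n" "a ! d \<noteq> b ! d"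
    "\<And>i. i < n \<Longrightarrow> i \<noteq> d \<Longrightarrow> a ! i = b ! i"
  shows "adjacent n a b" "direction a b = d"
proof -
  have d: "{i. i < n \<and> a ! i \<noteq> b ! i} = {d}" using assms by auto
  then show "adjacent n a b" using assms by (simp add: adjacent_def cube_vertices_def)
  show "direction a b = d"
    unfolding direction_def using assms d by (intro the_equality) auto
qed

lemma antipode_antipode [simp]: "antipode (antipode x) = x"
  by (simp add: antipode_def comp_def)

lemma antipode_in_cube_vertices_iff [simp]: "antipode x \<in> cube_vertices n \<longleftrightarrow> x \<in> cube_vertices n"
  by (simp add: cube_vertices_def antipode_def)

lemma hd_antipode: "x \<noteq> [] \<Longrightarrow> hd (antipode x) = (\<not> hd x)"
  by (cases x) (auto simp: antipode_def)

lemma tl_antipode: "tl (antipode x) = antipode (tl x)"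
  by (cases x) (auto simp: antipode_def)

lemma antipodal_edge_antipodal_edge [simp]: "antipodal_edge (antipodal_edge e) = e"
  by (simp add: antipodal_edge_def image_image)

lemma adjacent_antipode:
  assumes "adjacent n a b"
  shows "adjacent n (antipode a) (antipode b)" "direction (antipode a) (antipode b) = direction a b"
  using adjacentI[of "antipode a" n "antipode b" "direction a b"] adjacentD[OF assms]
  by (auto simp: antipode_def)

lemma adjacent_hd_eq_iff:
  assumes "adjacent (Suc n) a b"
  shows "hd a = hd b \<longleftrightarrow> direction a b \<noteq> 0"
proof -
  note D = adjacentD[OF assms]
  have "a ! 0 = hd a" "b ! 0 = hd b" using D(1,2) by (cases a; cases b; simp)+
  with D(4) D(5)[of 0] show ?thesis by (cases "direction a b = 0") auto
qed

lemma adjacent_tl: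
  assumes "adjacent (Suc n) a b" "direction a b \<noteq> 0"
  shows "adjacent n (tl a) (tl b)" "direction (tl a) (tl b) = direction a b - 1"
  using adjacentI[of "tl a" n "tl b" "direction a b - 1"] adjacentD[OF assms(1)] assms(2)
  by (auto simp: nth_tl)

lemma tl_eq_if_direction_zero:
  assumes "adjacent (Suc n) a b" "direction a b = 0"
  shows "tl a = tl b"
  using adjacentD[OF assms(1)] assms(2) by (intro nth_equalityI) (auto simp: nth_tl)

lemma path_edges_Nil [simp]: "path_edges [] = []"
  and path_edges_single [simp]: "path_edges [a] = []"
  and path_edges_Cons_Cons [simp]: "path_edges (a # b # p) = {a, b} # path_edges (b # p)"
  by (auto simp: path_edges_def upt_conv_Cons map_Suc_upt[symmetric] simp del: upt_Suc)

lemma path_directions_Nil [simp]: "path_directions [] = []"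
  and path_directions_single [simp]: "path_directions [a] = []"
  and path_directions_Cons_Cons [simp]:
    "path_directions (a # b # p) = direction a b # path_directions (b # p)"
  by (auto simp: path_directions_def upt_conv_Cons map_Suc_upt[symmetric] simp del: upt_Suc)

lemma is_path_Nil [simp]: "\<not> is_path n []"
  by (simp add: is_path_def)

lemma is_path_nonempty: "is_path n p \<Longrightarrow> p \<noteq> []"
  by (simp add: is_path_def)

lemma is_path_single [simp]: "is_path n [a] \<longleftrightarrow> a \<in> cube_vertices n"
  by (simp add: is_path_def)

lemma is_path_Cons_Cons [simp]: "is_path n (a # b # p) \<longleftrightarrow> adjacent n a b \<and> is_path n (b # p)"
proof -
  have "(\<forall>i. Suc i < length (a # b # p) \<longrightarrow> adjacent n ((a # b # p) ! i) ((a # b # p) ! Suc i))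
    \<longleftrightarrow> adjacent n a b \<and> (\<forall>i. Suc i < length (b # p) \<longrightarrow> adjacent n ((b # p) ! i) ((b # p) ! Suc i))"
    by (auto simp: less_Suc_eq_0_disj)
  moreover have "adjacent n a b \<Longrightarrow> a \<in> cube_vertices n" by (simp add: adjacent_def)
  ultimately show ?thesis by (auto simp: is_path_def)
qed

lemma path_edges_append:
  "P \<noteq> [] \<Longrightarrow> Q \<noteq> [] \<Longrightarrow>
    path_edges (P @ Q) = path_edges P @ {last P, hd Q} # path_edges Q"
  by (induction P rule: induct_list012) (auto simp: neq_Nil_conv)

lemma path_directions_append:
  "P \<noteq> [] \<Longrightarrow> Q \<noteq> [] \<Longrightarrow>
    path_directions (P @ Q) = path_directions P @ direction (last P) (hd Q) # path_directions Q"
  by (induction P rule: induct_list012) (auto simp: neq_Nil_conv)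

lemma is_path_append:
  "P \<noteq> [] \<Longrightarrow> Q \<noteq> [] \<Longrightarrow>
    is_path n (P @ Q) \<longleftrightarrow> is_path n P \<and> adjacent n (last P) (hd Q) \<and> is_path n Q"
  by (induction P rule: induct_list012) (auto simp: neq_Nil_conv adjacent_def)

lemma
  assumes "P \<noteq> []" "Q \<noteq> []" "last P = hd Q"
  shows path_edges_glue: "path_edges (P @ tl Q) = path_edges P @ path_edges Q"
    and path_directions_glue: "path_directions (P @ tl Q) = path_directions P @ path_directions Q"
    and is_path_glue: "is_path n (P @ tl Q) \<longleftrightarrow> is_path n P \<and> is_path n Q"
proof -
  obtain q Q' where Q: "Q = q # Q'" using assms(2) by (cases Q) auto
  show "path_edges (P @ tl Q) = path_edges P @ path_edges Q"
    "path_directions (P @ tl Q) = path_directions P @ path_directions Q"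
    using assms by (cases Q'; simp add: Q path_edges_append path_directions_append)+
  show "is_path n (P @ tl Q) \<longleftrightarrow> is_path n P \<and> is_path n Q"
  proof (cases "Q' = []")
    case True
    have "is_path n P \<Longrightarrow> last P \<in> cube_vertices n"
      using assms(1) last_in_set by (auto simp: is_path_def)
    with True show ?thesis using assms by (auto simp: Q)
  next
    case False
    then show ?thesis using assms by (auto simp: Q is_path_append neq_Nil_conv)
  qed
qed

lemma path_edges_map: "path_edges (map f p) = map ((`) f) (path_edges p)"
  by (induction p rule: induct_list012) auto

lemma path_edge_endpoints:
  "e \<in> set (path_edges p) \<Longrightarrow> \<exists>a b. e = {a, b} \<and> a \<in> set p \<and> b \<in> set p"
  by (induction p rule: induct_list012) auto

lemma path_edges_in_cube_edges: "is_path n p \<Longrightarrow> set (path_edges p) \<subseteq> cube_edges n"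
  by (induction p rule: induct_list012) (auto simp: cube_edges_def)

lemma
  assumes "is_path n p"
  shows is_path_map_antipode: "is_path n (map antipode p)"
    and path_directions_map_antipode: "path_directions (map antipode p) = path_directions p"
  using assms by (induction p rule: induct_list012) (auto simp: adjacent_antipode)

lemma
  assumes "is_path (Suc n) p" "0 \<notin> set (path_directions p)"
  shows is_path_map_tl: "is_path n (map tl p)"
    and path_directions_map_tl: "path_directions (map tl p) = map (\<lambda>d. d - 1) (path_directions p)"
  using assms by (induction p rule: induct_list012) (auto simp: adjacent_tl cube_vertices_def)

lemma hd_const_on_path:
  assumes "is_path (Suc n) p" "0 \<notin> set (path_directions p)" "v \<in> set p"
  shows "hd v = hd (hd p)"
  using assms
proof (induction p arbitrary: v rule: induct_list012)
  case (3 x y zs)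
  have "hd x = hd y" using "3.prems"(1,2) adjacent_hd_eq_iff by fastforce
  moreover have "hd v = hd y" if "v \<in> set (y # zs)"
    using "3.IH"(2)[OF _ _ that] "3.prems"(1,2) by simp
  ultimately show ?case using "3.prems"(3) by (cases "v = x") simp_all
qed simp_all

lemma last_glue: "P \<noteq> [] \<Longrightarrow> Q \<noteq> [] \<Longrightarrow> last P = hd Q \<Longrightarrow> last (P @ tl Q) = last Q"
  by (cases Q) auto

lemma path_edges_map_antipode: "path_edges (map antipode p) = map antipodal_edge (path_edges p)"
  by (simp add: path_edges_map antipodal_edge_def[abs_def])

lemma geodesic_between_hd_in_cube_vertices:
  "geodesic_between n p x y \<Longrightarrow> x \<in> cube_vertices n"
  by (auto simp: geodesic_between_def geodesic_def is_path_def)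

lemma geodesic_between_map_antipode:
  "geodesic_between n p x y \<Longrightarrow> geodesic_between n (map antipode p) (antipode x) (antipode y)"
  unfolding geodesic_between_def geodesic_def
  using hd_map[of p antipode] last_map[of p antipode] is_path_nonempty[of n p]
  by (auto simp: is_path_map_antipode path_directions_map_antipode)

lemma geodesic_half_turn:
  assumes geo: "geodesic_between n (P @ tl Q) x (antipode x)"
    and ne: "P \<noteq> []" "Q \<noteq> []" and glue: "last P = hd Q"
  shows "geodesic_between n (map antipode Q @ tl P) (antipode (hd Q)) (hd Q)"
    and "path_edges (map antipode Q @ tl P) = map antipodal_edge (path_edges Q) @ path_edges P"
proof -
  have paths: "is_path n P" "is_path n Q"
    and dist: "distinct (path_directions P @ path_directions Q)"
    using geo is_path_glue[OF ne glue] path_directions_glue[OF ne glue]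
    by (auto simp: geodesic_between_def geodesic_def)
  have "last Q = antipode x" "hd P = x"
    using geo last_glue[OF ne glue] ne by (auto simp: geodesic_between_def)
  then have glue': "last (map antipode Q) = hd P" using ne(2) by (simp add: last_map)
  have ne': "map antipode Q \<noteq> []" using ne(2) by simp
  show "path_edges (map antipode Q @ tl P) = map antipodal_edge (path_edges Q) @ path_edges P"
    using path_edges_glue[OF ne' ne(1) glue'] by (simp add: path_edges_map_antipode)
  have "is_path n (map antipode Q @ tl P)"
    using is_path_glue[OF ne' ne(1) glue'] paths by (simp add: is_path_map_antipode)
  moreover have "distinct (path_directions (map antipode Q @ tl P))"
    using path_directions_glue[OF ne' ne(1) glue'] dist paths(2)
    by (auto simp: path_directions_map_antipode)
  moreover have "hd (map antipode Q @ tl P) = antipode (hd Q)" using ne(2) by (simp add: hd_map)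
  moreover have "last (map antipode Q @ tl P) = hd Q" using last_glue[OF ne' ne(1) glue'] glue by simp
  ultimately show "geodesic_between n (map antipode Q @ tl P) (antipode (hd Q)) (hd Q)"
    by (simp add: geodesic_between_def geodesic_def)
qed

lemma map_eq_replicateD: "map f xs = replicate n y \<Longrightarrow> x \<in> set xs \<Longrightarrow> f x = y"
  by (metis imageI in_set_replicate list.set_map)

lemma map_eq_replicateI: "\<forall>x\<in>set xs. f x = y \<Longrightarrow> map f xs = replicate (length xs) y"
  by (rule replicate_eqI) auto

lemma antipodal_colouring_antipodal_edge:
  "antipodal_colouring n c \<Longrightarrow> e \<in> cube_edges n \<Longrightarrow> c (antipodal_edge e) = (\<not> c e)"
  by (auto simp: antipodal_colouring_def)

lemma monochromatic_geodesic_if_changes_colour_at_most_once: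
  assumes ac: "antipodal_colouring n c" and geo: "geodesic_between n q x (antipode x)"
    and once: "changes_colour_at_most_once c q"
  shows "\<exists>x p. x \<in> cube_vertices n \<and> geodesic_between n p x (antipode x) \<and> monochromatic c p"
proof -
  obtain b k m where col: "map c (path_edges q) = replicate k b @ replicate m (\<not> b)"
    using once by (auto simp: changes_colour_at_most_once_def)
  have path: "is_path n q" using geo by (simp add: geodesic_between_def geodesic_def)
  then have "q \<noteq> []" by auto
  moreover have "length q - 1 = k + m"
    using arg_cong[OF col, of length] by (simp add: path_edges_def)
  ultimately have k: "k < length q" by (cases q) auto
  define P where "P = take (Suc k) q"
  define Q where "Q = drop k q"
  have ne: "P \<noteq> []" "Q \<noteq> []" and glue: "last P = hd Q"
    using k by (auto simp: P_def Q_def take_Suc_conv_app_nth hd_drop_conv_nth)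
  have q: "P @ tl Q = q" by (simp add: P_def Q_def tl_drop drop_Suc[symmetric])
  have "length (path_edges P) = k" using k by (simp add: P_def path_edges_def)
  then have P_col: "map c (path_edges P) = replicate k b"
    and Q_col: "map c (path_edges Q) = replicate m (\<not> b)"
    using col path_edges_glue[OF ne glue] by (auto simp: q append_eq_append_conv)
  have "set (path_edges Q) \<subseteq> cube_edges n"
    using path is_path_glue[OF ne glue] path_edges_in_cube_edges by (auto simp: q)
  then have "c (antipodal_edge e) = b" if "e \<in> set (path_edges Q)" for e
    using that ac map_eq_replicateD[OF Q_col] by (auto simp: antipodal_colouring_antipodal_edge)
  then have "\<forall>e \<in> set (map antipodal_edge (path_edges Q) @ path_edges P). c e = b"
    using map_eq_replicateD[OF P_col] by auto
  moreover note geodesic_half_turn[OF geo[folded q] ne glue]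
  ultimately show ?thesis unfolding monochromatic_def
    by (metis antipode_antipode geodesic_between_hd_in_cube_vertices)
qed

text \<open>The first coordinate (hd) splits Q_(n+1) into two copies of Q_n, and tl is the projection
onto them. Edges of direction 0 are coloured by coordinate 1, which exists since n \<ge> 1 and which
the antipodal map negates.\<close>

definition antipodal_lift :: "(bool list set \<Rightarrow> bool) \<Rightarrow> bool list set \<Rightarrow> bool" where
  "antipodal_lift c e =
    (if \<forall>v\<in>e. \<not> hd v then c (tl ` e)
     else if \<forall>v\<in>e. hd v then \<not> c (antipodal_edge (tl ` e))
     else (\<exists>v\<in>e. v ! 1))"

lemma tl_image_antipodal_edge: "tl ` antipodal_edge e = antipodal_edge (tl ` e)"
  by (auto simp: antipodal_edge_def tl_antipode image_image)

lemma antipodal_lift_horizontal: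
  "e \<noteq> {} \<Longrightarrow> \<forall>v\<in>e. hd v = h \<Longrightarrow>
    antipodal_lift c e = (if h then \<not> c (antipodal_edge (tl ` e)) else c (tl ` e))"
  by (auto simp: antipodal_lift_def)

lemma antipodal_lift_vertical:
  "hd x \<noteq> hd y \<Longrightarrow> x ! 1 = y ! 1 \<Longrightarrow> antipodal_lift c {x, y} = x ! 1"
  by (auto simp: antipodal_lift_def)

lemma antipodal_colouring_antipodal_lift:
  assumes "n \<ge> 1"
  shows "antipodal_colouring (Suc n) (antipodal_lift c)"
  unfolding antipodal_colouring_def
proof
  fix e assume "e \<in> cube_edges (Suc n)"
  then obtain a b where e: "e = {a, b}" and ab: "adjacent (Suc n) a b"
    by (auto simp: cube_edges_def)
  have len: "length a = Suc n" "length b = Suc n" using adjacentD[OF ab] by simp_all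
  then have "a \<noteq> []" "b \<noteq> []" by auto
  then have anti: "antipodal_edge e = {antipode a, antipode b}"
    "hd (antipode a) = (\<not> hd a)" "hd (antipode b) = (\<not> hd b)"
    by (simp_all add: e antipodal_edge_def hd_antipode)
  show "antipodal_lift c e \<noteq> antipodal_lift c (antipodal_edge e)"
  proof (cases "hd a = hd b")
    case True
    then have "\<forall>v\<in>e. hd v = hd a" "\<forall>v\<in>antipodal_edge e. hd v = (\<not> hd a)"
      by (auto simp: e anti(2,3) anti(1)[unfolded e])
    moreover have "e \<noteq> {}" "antipodal_edge e \<noteq> {}" by (simp_all add: e antipodal_edge_def)
    ultimately show ?thesis
      using antipodal_lift_horizontal[of e "hd a"]
        antipodal_lift_horizontal[of "antipodal_edge e" "\<not> hd a"]
      by (simp add: tl_image_antipodal_edge)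
  next
    case False
    then have "direction a b = 0" using adjacent_hd_eq_iff[OF ab] by simp
    then have "a ! 1 = b ! 1" using adjacentD(5)[OF ab, of 1] assms by simp
    moreover have "antipode a ! 1 = (\<not> a ! 1)" "antipode b ! 1 = (\<not> b ! 1)"
      using len assms by (auto simp: antipode_def)
    ultimately show ?thesis
      using False antipodal_lift_vertical[of a b] antipodal_lift_vertical[of "antipode a" "antipode b"]
      by (simp add: e anti(1)[unfolded e] anti(2,3))
  qed
qed

lemma monochromatic_geodesic_from_lower_half:
  assumes ac: "antipodal_colouring n c" and geo: "geodesic_between n p y (antipode y)"
    and mono: "monochromatic c p" and "y \<noteq> []"
  obtains y' p' b where "geodesic_between n p' y' (antipode y')" "\<not> hd y'"
    "\<forall>e\<in>set (path_edges p'). c e = b"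
proof -
  obtain b where b: "\<forall>e\<in>set (path_edges p). c e = b" using mono by (auto simp: monochromatic_def)
  show ?thesis
  proof (cases "hd y")
    case False
    with geo b that show ?thesis by blast
  next
    case True
    have "set (path_edges p) \<subseteq> cube_edges n"
      using geo path_edges_in_cube_edges by (simp add: geodesic_between_def geodesic_def)
    then have "\<forall>e\<in>set (path_edges (map antipode p)). c e = (\<not> b)"
      using ac b by (auto simp: path_edges_map_antipode antipodal_colouring_antipodal_edge)
    moreover have "\<not> hd (antipode y)" using True \<open>y \<noteq> []\<close> by (simp add: hd_antipode)
    ultimately show ?thesis
      using that geodesic_between_map_antipode[OF geo] by (metis antipode_antipode)
  qed
qed

lemma split_path_at_first_coordinate:
  assumes path: "is_path (Suc n) p" and dist: "distinct (path_directions p)"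
    and start: "\<not> hd (hd p)" and finish: "hd (last p)"
  obtains p1 p2 where "p = p1 @ p2" "p1 \<noteq> []" "p2 \<noteq> []"
    "\<forall>v\<in>set p1. \<not> hd v" "\<forall>v\<in>set p2. hd v"
proof -
  define p1 where "p1 = takeWhile (\<lambda>v. \<not> hd v) p"
  define p2 where "p2 = dropWhile (\<lambda>v. \<not> hd v) p"
  have p: "p = p1 @ p2" by (simp add: p1_def p2_def)
  have lower: "\<forall>v\<in>set p1. \<not> hd v" by (auto simp: p1_def dest: set_takeWhileD)
  have "p \<noteq> []" using path by (rule is_path_nonempty)
  then have ne: "p1 \<noteq> []" "p2 \<noteq> []"
    using start finish last_in_set by (auto simp: p1_def p2_def takeWhile_eq_Nil_iff)
  have "hd (hd p2)" using hd_dropWhile[OF ne(2)[unfolded p2_def]] by (simp add: p2_def)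
  have "adjacent (Suc n) (last p1) (hd p2)" "is_path (Suc n) p2"
    using path is_path_append[OF ne] by (simp_all add: p)
  moreover have "hd (last p1) \<noteq> hd (hd p2)" using lower ne(1) \<open>hd (hd p2)\<close> by simp
  ultimately have "direction (last p1) (hd p2) = 0" "is_path (Suc n) p2"
    using adjacent_hd_eq_iff by simp_all
  \<comment> \<open>direction 0 is used up by the crossing edge, so p2 never leaves the upper half\<close>
  then have "0 \<notin> set (path_directions p2)"
    using dist path_directions_append[OF ne] by (simp add: p)
  then have "\<forall>v\<in>set p2. hd v"
    using hd_const_on_path[OF \<open>is_path (Suc n) p2\<close>] \<open>hd (hd p2)\<close> by simp
  with p ne lower show ?thesis by (rule that)
qed

lemma geodesic_between_project_halves:
  assumes geo: "geodesic_between (Suc n) (p1 @ p2) y (antipode y)"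
    and ne: "p1 \<noteq> []" "p2 \<noteq> []" and cross: "hd (last p1) \<noteq> hd (hd p2)"
  shows "geodesic_between n (map tl p1 @ tl (map tl p2)) (tl y) (antipode (tl y))"
    and "last (map tl p1) = hd (map tl p2)"
proof -
  have paths: "is_path (Suc n) p1" "is_path (Suc n) p2"
    and step: "adjacent (Suc n) (last p1) (hd p2)"
    and dist: "distinct (path_directions p1 @ direction (last p1) (hd p2) # path_directions p2)"
    using geo is_path_append[OF ne] path_directions_append[OF ne]
    by (auto simp: geodesic_between_def geodesic_def)
  have "direction (last p1) (hd p2) = 0" using adjacent_hd_eq_iff[OF step] cross by simp
  then have glue: "last (map tl p1) = hd (map tl p2)"
    and zero: "0 \<notin> set (path_directions p1)" "0 \<notin> set (path_directions p2)"
    using tl_eq_if_direction_zero[OF step] ne dist by (auto simp: last_map hd_map)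
  show "last (map tl p1) = hd (map tl p2)" by (rule glue)
  have ne': "map tl p1 \<noteq> []" "map tl p2 \<noteq> []" using ne by simp_all
  have "path_directions (map tl p1 @ tl (map tl p2))
      = map (\<lambda>d. d - 1) (path_directions p1 @ path_directions p2)"
    using path_directions_glue[OF ne' glue] paths zero by (simp add: path_directions_map_tl)
  moreover have "inj_on (\<lambda>d. d - 1) (set (path_directions p1 @ path_directions p2))"
    using zero unfolding inj_on_def by (metis Suc_pred' gr0I Un_iff set_append)
  ultimately have "distinct (path_directions (map tl p1 @ tl (map tl p2)))"
    using dist by (simp only: distinct_map) simp
  moreover have "is_path n (map tl p1 @ tl (map tl p2))"
    using is_path_glue[OF ne' glue] paths zero by (simp add: is_path_map_tl)
  moreover have "hd (map tl p1 @ tl (map tl p2)) = tl y" "last (map tl p1 @ tl (map tl p2)) = antipode (tl y)"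
    using geo ne last_glue[OF ne' glue]
    by (auto simp: geodesic_between_def hd_map last_map tl_antipode)
  ultimately show "geodesic_between n (map tl p1 @ tl (map tl p2)) (tl y) (antipode (tl y))"
    by (simp add: geodesic_between_def geodesic_def)
qed

lemma antipodal_lift_path_edge:
  assumes "e \<in> set (path_edges p)" "\<forall>v\<in>set p. hd v = h"
  shows "antipodal_lift c e = (if h then \<not> c (antipodal_edge (tl ` e)) else c (tl ` e))"
proof -
  obtain a b where "e = {a, b}" "a \<in> set p" "b \<in> set p" using path_edge_endpoints[OF assms(1)] by blast
  then show ?thesis using assms(2) by (intro antipodal_lift_horizontal) auto
qed

lemma geodesic_changing_colour_once_if_lift_monochromatic:
  assumes geo: "geodesic_between (Suc n) p y (antipode y)" and lower: "\<not> hd y"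
    and mono: "\<forall>e\<in>set (path_edges p). antipodal_lift c e = b"
  shows "\<exists>x r. x \<in> cube_vertices n \<and> geodesic_between n r x (antipode x) \<and> changes_colour_at_most_once c r"
proof -
  have path: "is_path (Suc n) p" "distinct (path_directions p)" "hd p = y" "last p = antipode y"
    using geo by (auto simp: geodesic_between_def geodesic_def)
  have "y \<noteq> []" using geodesic_between_hd_in_cube_vertices[OF geo] by (auto simp: cube_vertices_def)
  then have "hd (last p)" using lower path(4) by (simp add: hd_antipode)
  then obtain p1 p2 where p: "p = p1 @ p2" and ne: "p1 \<noteq> []" "p2 \<noteq> []"
    and halves: "\<forall>v\<in>set p1. hd v = False" "\<forall>v\<in>set p2. hd v = True"
    using split_path_at_first_coordinate path lower by (metis (full_types))
  define P where "P = map tl p1"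
  define Q where "Q = map tl p2"
  have "hd (last p1) \<noteq> hd (hd p2)" using ne halves by simp
  from geodesic_between_project_halves[OF geo[unfolded p] ne this]
  have geo': "geodesic_between n (P @ tl Q) (tl y) (antipode (tl y))" and glue: "last P = hd Q"
    by (simp_all add: P_def Q_def)
  have ne': "P \<noteq> []" "Q \<noteq> []" using ne by (simp_all add: P_def Q_def)
  have sub: "set (path_edges p1) \<subseteq> set (path_edges p)" "set (path_edges p2) \<subseteq> set (path_edges p)"
    using path_edges_append[OF ne] by (auto simp: p)
  have "c (tl ` e) = b" if "e \<in> set (path_edges p1)" for e
    using that sub mono antipodal_lift_path_edge[OF that halves(1), of c] by auto
  moreover have "c (antipodal_edge (tl ` e)) = (\<not> b)" if "e \<in> set (path_edges p2)" for e
    using that sub mono antipodal_lift_path_edge[OF that halves(2), of c] by auto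
  ultimately have "map (c \<circ> antipodal_edge) (path_edges Q) = replicate (length (path_edges Q)) (\<not> b)"
    "map c (path_edges P) = replicate (length (path_edges P)) b"
    by (auto simp: P_def Q_def path_edges_map intro!: map_eq_replicateI)
  then have "map c (path_edges (map antipode Q @ tl P))
      = replicate (length (path_edges Q)) (\<not> b) @ replicate (length (path_edges P)) b"
    by (simp add: geodesic_half_turn(2)[OF geo' ne' glue])
  then have "changes_colour_at_most_once c (map antipode Q @ tl P)"
    unfolding changes_colour_at_most_once_def by (intro exI[of _ "\<not> b"]) auto
  then show ?thesis using geodesic_half_turn(1)[OF geo' ne' glue]
    by (metis antipode_antipode geodesic_between_hd_in_cube_vertices)
qed

theorem proposition13:
  shows "(\<forall>n\<ge>1. \<forall>c. antipodal_colouring n c \<longrightarrow>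
            (\<exists>x p. x \<in> cube_vertices n \<and> geodesic_between n p x (antipode x) \<and> monochromatic c p))
     \<longleftrightarrow>
         (\<forall>n\<ge>1. \<forall>c.
            (\<exists>x p. x \<in> cube_vertices n \<and> geodesic_between n p x (antipode x) \<and> changes_colour_at_most_once c p))"
    (is "(\<forall>n\<ge>1. \<forall>c. _ \<longrightarrow> ?A n c) \<longleftrightarrow> (\<forall>n\<ge>1. \<forall>c. ?B n c)")
proof (intro iffI allI impI)
  fix n :: nat and c
  assume A: "\<forall>n\<ge>1. \<forall>c. antipodal_colouring n c \<longrightarrow> ?A n c" and "n \<ge> 1"
  then have lift: "antipodal_colouring (Suc n) (antipodal_lift c)"
    using antipodal_colouring_antipodal_lift by blast
  then obtain y p where "y \<in> cube_vertices (Suc n)" and geo: "geodesic_between (Suc n) p y (antipode y)"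
    and mono: "monochromatic (antipodal_lift c) p"
    using A[rule_format, of "Suc n" "antipodal_lift c"] by auto
  then have "y \<noteq> []" by (auto simp: cube_vertices_def)
  then obtain y' p' b where "geodesic_between (Suc n) p' y' (antipode y')" "\<not> hd y'"
    "\<forall>e\<in>set (path_edges p'). antipodal_lift c e = b"
    by (rule monochromatic_geodesic_from_lower_half[OF lift geo mono])
  then show "?B n c" by (rule geodesic_changing_colour_once_if_lift_monochromatic)
next
  fix n :: nat and c
  assume B: "\<forall>n\<ge>1. \<forall>c. ?B n c" and "n \<ge> 1" and ac: "antipodal_colouring n c"
  have "?B n c" using B \<open>n \<ge> 1\<close> by simp
  then obtain x q where "geodesic_between n q x (antipode x)" "changes_colour_at_most_once c q"
    by blast
  then show "?A n c" by (rule monochromatic_geodesic_if_changes_colour_at_most_once[OF ac])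
qed

end
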